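(* For every integer $p\ge 1$ and every integer $n\ge p+2$, $$\sigma(K_{p,1,1},n)\;\ge\; 2\left\lfloor \frac{(p+1)(n-1)+2}{2}\right\rfloor .$$
   Context: A finite sequence $S=(d_1,\dots,d_n)$ of non-negative integers is graphical if it is the degree sequence of some simple graph on $n$ vertices (a realization of $S$). Write $\sigma(S)=d_1+\dots+d_n$. For a graph $H$, a graphical sequence $S$ is potentially $H$-graphical if some realization of $S$ contains $H$ as a subgraph. $K_{p,1,1}$ denotes the complete 3-partite graph with parts of sizes $p,1,1$. $\sigma(H,n)$ denotes the minimum even integer $l$ such that every $n$-term graphical sequence $S$ with $\sigma(S)\ge l$ is potentially $H$-graphical. $\lfloor x\rfloor$ is the largest integer $\le x$. *)

theory Defs
  imports Main
begin

definition simple_graph :: "nat \<Rightarrow> (nat \<Rightarrow> nat \<Rightarrow> bool) \<Rightarrow> bool" where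
  "simple_graph n E \<longleftrightarrow>
     (\<forall>i j. E i j \<longrightarrow> i < n \<and> j < n) \<and>
     (\<forall>i j. E i j \<longrightarrow> E j i) \<and>
     (\<forall>i. \<not> E i i)"

definition degree :: "nat \<Rightarrow> (nat \<Rightarrow> nat \<Rightarrow> bool) \<Rightarrow> nat \<Rightarrow> nat" where
  "degree n E i = card {j. j < n \<and> E i j}"

definition realizes :: "(nat \<Rightarrow> nat \<Rightarrow> bool) \<Rightarrow> nat list \<Rightarrow> bool" where
  "realizes E S \<longleftrightarrow> simple_graph (length S) E \<and>
     (\<forall>i < length S. degree (length S) E i = S ! i)"

definition graphical :: "nat list \<Rightarrow> bool" where
  "graphical S \<longleftrightarrow> (\<exists>E. realizes E S)"

definition contains_subgraph ::
  "nat \<Rightarrow> (nat \<Rightarrow> nat \<Rightarrow> bool) \<Rightarrow> nat \<Rightarrow> (nat \<Rightarrow> nat \<Rightarrow> bool) \<Rightarrow> bool" where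
  "contains_subgraph n E h EH \<longleftrightarrow>
     (\<exists>f. inj_on f {0..<h} \<and> f ` {0..<h} \<subseteq> {0..<n} \<and>
          (\<forall>i j. i < h \<longrightarrow> j < h \<longrightarrow> EH i j \<longrightarrow> E (f i) (f j)))"

definition potentially_graphical ::
  "nat \<Rightarrow> (nat \<Rightarrow> nat \<Rightarrow> bool) \<Rightarrow> nat list \<Rightarrow> bool" where
  "potentially_graphical h EH S \<longleftrightarrow> graphical S \<and>
     (\<exists>E. realizes E S \<and> contains_subgraph (length S) E h EH)"

definition sigma_H :: "nat \<Rightarrow> (nat \<Rightarrow> nat \<Rightarrow> bool) \<Rightarrow> nat \<Rightarrow> nat" where
  "sigma_H h EH n = (LEAST l. even l \<and>
     (\<forall>S. length S = n \<longrightarrow> graphical S \<longrightarrow> sum_list S \<ge> l \<longrightarrow>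
          potentially_graphical h EH S))"

definition K_p11_part :: "nat \<Rightarrow> nat" where
  "K_p11_part i = (if i = 0 then 0 else if i = 1 then 1 else 2)"

definition K_p11 :: "nat \<Rightarrow> nat \<Rightarrow> nat \<Rightarrow> bool" where
  "K_p11 p i j \<longleftrightarrow> i < p + 2 \<and> j < p + 2 \<and> K_p11_part i \<noteq> K_p11_part j"

end

theory Submission
  imports Defs
begin

text \<open>Take a graph on n - 1 vertices with maximum degree p - 1 and as many edges as
  possible, namely \<lfloor>(p - 1)(n - 1)/2\<rfloor> (a circulant graph, plus an antipodal
  matching when p - 1 is odd), and join a new vertex to all of its vertices. In the
  resulting degree sequence only the new vertex has degree above p, while each of the two
  singleton parts of K_{p,1,1} has degree p + 1. So the sequence is not potentially
  K_{p,1,1}-graphical, and its even sum 2\<lfloor>(p + 1)(n - 1)/2\<rfloor> is therefore smaller than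
  the even number \<sigma>(K_{p,1,1}, n).\<close>

definition cyc_offset :: "nat \<Rightarrow> nat \<Rightarrow> nat \<Rightarrow> nat" where
  "cyc_offset m i j = (j + (m - i)) mod m"

definition circulant :: "nat \<Rightarrow> nat set \<Rightarrow> nat \<Rightarrow> nat \<Rightarrow> bool" where
  "circulant m D i j \<longleftrightarrow> i < m \<and> j < m \<and> cyc_offset m i j \<in> D"

definition cyc_band :: "nat \<Rightarrow> nat \<Rightarrow> nat set" where
  "cyc_band m r = {d. 0 < d \<and> d < m \<and> (d \<le> r \<or> m - r \<le> d)}"

definition antipodal_matching :: "nat \<Rightarrow> nat \<Rightarrow> nat \<Rightarrow> bool" where
  "antipodal_matching m i j \<longleftrightarrow>
     (i < m div 2 \<and> j = i + m div 2) \<or> (j < m div 2 \<and> i = j + m div 2)"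

definition cone :: "nat \<Rightarrow> (nat \<Rightarrow> nat \<Rightarrow> bool) \<Rightarrow> nat \<Rightarrow> nat \<Rightarrow> bool" where
  "cone m G i j \<longleftrightarrow> G i j \<or> (i = m \<and> j < m) \<or> (j = m \<and> i < m)"

lemma cyc_offset_eq:
  assumes "i < m" "j < m"
  shows "cyc_offset m i j = (if i \<le> j then j - i else j + m - i)"
proof (cases "i \<le> j")
  case True
  then have "j + (m - i) = (j - i) + m" using assms by simp
  then have "cyc_offset m i j = (j - i) mod m" by (simp only: cyc_offset_def mod_add_self2)
  then show ?thesis using True assms by simp
qed (use assms in \<open>simp add: cyc_offset_def\<close>)

lemma degree_circulant:
  assumes "i < m" "D \<subseteq> {..<m}"
  shows "degree m (circulant m D) i = card D"
proof -
  have "bij_betw (\<lambda>d. (d + i) mod m) D {j. j < m \<and> cyc_offset m i j \<in> D}"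
  proof (rule bij_betw_byWitness[where f' = "cyc_offset m i"])
    have "cyc_offset m i ((d + i) mod m) = d" if "d \<in> D" for d
    proof -
      have "cyc_offset m i ((d + i) mod m) = (d + i + (m - i)) mod m"
        by (simp add: cyc_offset_def mod_add_left_eq)
      also have "d + i + (m - i) = d + m" using assms by simp
      finally show ?thesis using that assms by auto
    qed
    then show "\<forall>d\<in>D. cyc_offset m i ((d + i) mod m) = d"
      and "(\<lambda>d. (d + i) mod m) ` D \<subseteq> {j. j < m \<and> cyc_offset m i j \<in> D}"
      using assms by auto
    show "cyc_offset m i ` {j. j < m \<and> cyc_offset m i j \<in> D} \<subseteq> D" by auto
    have "(cyc_offset m i j + i) mod m = j" if "j < m" for j
    proof -
      have "(cyc_offset m i j + i) mod m = (j + (m - i) + i) mod m"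
        by (simp add: cyc_offset_def mod_add_left_eq)
      also have "j + (m - i) + i = j + m" using assms by simp
      finally show ?thesis using that by simp
    qed
    then show "\<forall>j\<in>{j. j < m \<and> cyc_offset m i j \<in> D}. (cyc_offset m i j + i) mod m = j"
      by simp
  qed
  then show ?thesis using assms(1) by (simp add: degree_def circulant_def bij_betw_same_card)
qed

lemma simple_graph_circulant:
  assumes "0 \<notin> D" "\<And>d. d \<in> D \<Longrightarrow> m - d \<in> D"
  shows "simple_graph m (circulant m D)"
proof -
  have "circulant m D j i" if "circulant m D i j" for i j
  proof -
    have "i \<noteq> j" using that assms(1) by (auto simp: circulant_def cyc_offset_def)
    then have "cyc_offset m j i = m - cyc_offset m i j"
      using that by (auto simp: circulant_def cyc_offset_eq)
    then show ?thesis using that assms(2) by (simp add: circulant_def)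
  qed
  moreover have "\<not> circulant m D i i" for i
    using assms(1) by (simp add: circulant_def cyc_offset_def)
  ultimately show ?thesis by (auto simp: simple_graph_def circulant_def)
qed

lemma card_cyc_band:
  assumes "2 * r < m"
  shows "card (cyc_band m r) = 2 * r"
proof -
  have "cyc_band m r = {1..r} \<union> {m - r..<m}" and "{1..r} \<inter> {m - r..<m} = {}"
    using assms by (auto simp: cyc_band_def)
  then show ?thesis using assms by (simp add: card_Un_disjoint)
qed

lemma simple_graph_antipodal_matching: "simple_graph m (antipodal_matching m)"
  by (auto simp: simple_graph_def antipodal_matching_def)

lemma degree_antipodal_matching:
  "degree m (antipodal_matching m) i = of_bool (i < 2 * (m div 2))"
proof -
  have "{j. j < m \<and> antipodal_matching m i j} =
        (if i < m div 2 then {i + m div 2} else if i < 2 * (m div 2) then {i - m div 2} else {})"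
    by (auto simp: antipodal_matching_def)
  then show ?thesis by (simp add: degree_def)
qed

lemma simple_graph_disj:
  assumes "simple_graph n G" "simple_graph n H"
  shows "simple_graph n (\<lambda>i j. G i j \<or> H i j)"
  using assms by (auto simp: simple_graph_def)

lemma degree_disj:
  assumes "\<And>j. \<not> (G i j \<and> H i j)"
  shows "degree n (\<lambda>i j. G i j \<or> H i j) i = degree n G i + degree n H i"
proof -
  have "{j. j < n \<and> (G i j \<or> H i j)} = {j. j < n \<and> G i j} \<union> {j. j < n \<and> H i j}" by auto
  then show ?thesis using assms by (simp add: degree_def card_Un_disjoint disjoint_iff)
qed

lemma simple_graph_circulant_cyc_band: "simple_graph m (circulant m (cyc_band m r))"
  by (rule simple_graph_circulant) (auto simp: cyc_band_def)

lemma degree_circulant_cyc_band: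
  assumes "2 * r < m" "i < m"
  shows "degree m (circulant m (cyc_band m r)) i = 2 * r"
  using assms degree_circulant[of i m "cyc_band m r"] card_cyc_band[of r m]
  by (auto simp: cyc_band_def)

lemma circulant_cyc_band_antipodal_disjoint:
  assumes "2 * r + 1 < m"
  shows "\<not> (circulant m (cyc_band m r) i j \<and> antipodal_matching m i j)"
proof
  assume edge: "circulant m (cyc_band m r) i j \<and> antipodal_matching m i j"
  then have "cyc_offset m i j = m div 2 \<or> cyc_offset m i j = m - m div 2"
    by (auto simp: circulant_def antipodal_matching_def cyc_offset_eq)
  moreover have "r < m div 2" "m div 2 \<le> m - m div 2" using assms by linarith+
  ultimately show False using edge by (auto simp: circulant_def cyc_band_def)
qed

lemma exists_near_regular_graph:
  assumes "k < m"
  shows "\<exists>G. simple_graph m G \<and> (\<forall>i<m. degree m G i \<le> k) \<and>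
             (\<Sum>i<m. degree m G i) = 2 * (k * m div 2)"
proof -
  define r where "r = k div 2"
  define C where "C = circulant m (cyc_band m r)"
  have C: "simple_graph m C" "\<And>i. i < m \<Longrightarrow> degree m C i = 2 * r"
    using assms simple_graph_circulant_cyc_band degree_circulant_cyc_band
    by (auto simp: C_def r_def)
  show ?thesis
  proof (cases "even k")
    case True
    then show ?thesis using C by (intro exI[of _ C]) (simp add: r_def)
  next
    case False
    then have k: "k = 2 * r + 1" by (simp add: r_def)
    define h where "h = m div 2"
    define G where "G = (\<lambda>i j. C i j \<or> antipodal_matching m i j)"
    have deg: "degree m G i = 2 * r + of_bool (i < 2 * h)" if "i < m" for i
      using that assms C circulant_cyc_band_antipodal_disjoint[of r m]
      by (simp add: G_def C_def k degree_disj degree_antipodal_matching h_def)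
    have "simple_graph m G"
      using C simple_graph_antipodal_matching by (simp add: G_def simple_graph_disj)
    moreover have "\<forall>i<m. degree m G i \<le> k" using deg by (simp add: k)
    moreover have "(\<Sum>i<m. degree m G i) = 2 * (k * m div 2)"
    proof -
      have "(\<Sum>i<m. degree m G i) = (\<Sum>i<m. 2 * r + of_bool (i < 2 * h))"
        using deg by simp
      also have "\<dots> = 2 * r * m + card {..<2 * h}"
        by (simp add: sum.distrib Int_absorb1 h_def flip: lessThan_def)
      also have "\<dots> = 2 * (k * m div 2)"
      proof -
        have "k * m = m + 2 * (r * m)" by (simp add: k algebra_simps)
        then show ?thesis by (simp add: h_def)
      qed
      finally show ?thesis .
    qed
    ultimately show ?thesis by blast
  qed
qed

lemma simple_graph_cone:
  assumes "simple_graph m G"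
  shows "simple_graph (Suc m) (cone m G)"
proof -
  have "G i j \<Longrightarrow> i < m \<and> j < m" for i j using assms by (simp add: simple_graph_def)
  then show ?thesis using assms by (auto simp: simple_graph_def cone_def less_Suc_eq)
qed

lemma degree_cone:
  assumes "simple_graph m G" "i < m"
  shows "degree (Suc m) (cone m G) i = degree m G i + 1"
proof -
  have "{j. j < Suc m \<and> cone m G i j} = insert m {j. j < m \<and> G i j}"
    using assms by (auto simp: cone_def simple_graph_def)
  then show ?thesis by (simp add: degree_def)
qed

lemma degree_cone_apex:
  assumes "simple_graph m G"
  shows "degree (Suc m) (cone m G) m = m"
proof -
  have "{j. j < Suc m \<and> cone m G m j} = {..<m}"
    using assms by (auto simp: cone_def simple_graph_def)
  then show ?thesis by (simp add: degree_def)
qed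

lemma sum_degree_cone:
  assumes "simple_graph m G"
  shows "(\<Sum>i<Suc m. degree (Suc m) (cone m G) i) = (\<Sum>i<m. degree m G i) + 2 * m"
proof -
  have "(\<Sum>i<Suc m. degree (Suc m) (cone m G) i) = (\<Sum>i<m. degree m G i + 1) + m"
    using degree_cone[OF assms] degree_cone_apex[OF assms] by simp
  then show ?thesis unfolding sum.distrib by simp
qed

lemma realizes_degree_sequence:
  assumes "simple_graph n E"
  shows "realizes E (map (degree n E) [0..<n])"
  using assms by (simp add: realizes_def)

lemma contains_subgraph_degree_mono:
  assumes "contains_subgraph n E h EH"
  obtains f where "inj_on f {0..<h}" "f ` {0..<h} \<subseteq> {0..<n}"
    "\<And>v. v < h \<Longrightarrow> degree h EH v \<le> degree n E (f v)"
proof -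
  obtain f where f: "inj_on f {0..<h}" "f ` {0..<h} \<subseteq> {0..<n}"
    "\<And>i j. i < h \<Longrightarrow> j < h \<Longrightarrow> EH i j \<Longrightarrow> E (f i) (f j)"
    using assms by (auto simp: contains_subgraph_def)
  have "degree h EH v \<le> degree n E (f v)" if "v < h" for v
  proof -
    have "inj_on f {u. u < h \<and> EH v u}" using f(1) by (rule inj_on_subset) auto
    then have "degree h EH v = card (f ` {u. u < h \<and> EH v u})"
      by (simp add: degree_def card_image)
    also have "\<dots> \<le> degree n E (f v)"
      unfolding degree_def using f(2,3) that by (intro card_mono) (auto simp: image_subset_iff)
    finally show ?thesis .
  qed
  with f(1,2) show ?thesis by (rule that)
qed

lemma degree_K_p11_singleton_part:
  assumes "v < 2"
  shows "degree (p + 2) (K_p11 p) v = p + 1"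
proof -
  have "{j. j < p + 2 \<and> K_p11 p v j} = {0..<p + 2} - {v}"
    using assms by (auto simp: K_p11_def K_p11_part_def)
  then show ?thesis using assms by (simp add: degree_def)
qed

lemma potentially_K_p11_two_large_entries:
  assumes "potentially_graphical (p + 2) (K_p11 p) S"
  shows "\<exists>a b. a \<noteq> b \<and> a < length S \<and> b < length S \<and> p + 1 \<le> S ! a \<and> p + 1 \<le> S ! b"
proof -
  obtain E where E: "realizes E S" "contains_subgraph (length S) E (p + 2) (K_p11 p)"
    using assms by (auto simp: potentially_graphical_def)
  obtain f where f: "inj_on f {0..<p + 2}" "f ` {0..<p + 2} \<subseteq> {0..<length S}"
    "\<And>v. v < p + 2 \<Longrightarrow> degree (p + 2) (K_p11 p) v \<le> degree (length S) E (f v)"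
    using contains_subgraph_degree_mono[OF E(2)] by blast
  have large: "f v < length S \<and> p + 1 \<le> S ! f v" if "v < 2" for v
    using that f(2) f(3)[of v] E(1) degree_K_p11_singleton_part[of v p]
    by (auto simp: realizes_def image_subset_iff)
  have "f 0 \<noteq> f 1" using inj_onD[OF f(1), of 0 1] by auto
  then show ?thesis using large[of 0] large[of 1] by auto
qed

lemma sum_list_realizes_le:
  assumes "realizes E S"
  shows "sum_list S \<le> length S * length S"
proof -
  have "S ! i \<le> length S" if "i < length S" for i
  proof -
    have "degree (length S) E i \<le> card {..<length S}"
      unfolding degree_def by (rule card_mono) auto
    then show ?thesis using assms that by (simp add: realizes_def)
  qed
  then have "(\<Sum>i<length S. S ! i) \<le> length S * length S"
    using sum_bounded_above[of "{..<length S}" "(!) S" "length S"] by simp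
  then show ?thesis by (simp add: sum_list_sum_nth atLeast0LessThan)
qed

lemma sigma_H_spec:
  "even (sigma_H h EH n) \<and>
   (\<forall>S. length S = n \<longrightarrow> graphical S \<longrightarrow> sum_list S \<ge> sigma_H h EH n \<longrightarrow>
        potentially_graphical h EH S)"
  unfolding sigma_H_def
proof (rule LeastI)
  show "even (2 * (n * n) + 2) \<and>
    (\<forall>S. length S = n \<longrightarrow> graphical S \<longrightarrow> sum_list S \<ge> 2 * (n * n) + 2 \<longrightarrow>
         potentially_graphical h EH S)"
    using sum_list_realizes_le by (fastforce simp: graphical_def)
qed

lemma sum_list_lt_sigma_H:
  assumes "length S = n" "graphical S" "\<not> potentially_graphical h EH S"
  shows "sum_list S < sigma_H h EH n"
  using sigma_H_spec[of h EH n] assms by (auto simp: not_less[symmetric])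

lemma exists_not_potentially_K_p11_graphical:
  assumes "1 \<le> p" "p + 2 \<le> n"
  shows "\<exists>S. length S = n \<and> graphical S \<and> \<not> potentially_graphical (p + 2) (K_p11 p) S \<and>
             sum_list S = 2 * ((p + 1) * (n - 1) div 2)"
proof -
  define m where "m = n - 1"
  have n: "n = Suc m" using assms by (simp add: m_def)
  have "p - 1 < m" using assms by (simp add: m_def)
  then obtain G where G: "simple_graph m G" "\<And>i. i < m \<Longrightarrow> degree m G i \<le> p - 1"
    "(\<Sum>i<m. degree m G i) = 2 * ((p - 1) * m div 2)"
    using exists_near_regular_graph by blast
  define E where "E = cone m G"
  define S where "S = map (degree n E) [0..<n]"
  have realizes: "realizes E S"
    unfolding S_def E_def n using G(1) by (intro realizes_degree_sequence simple_graph_cone)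
  have length: "length S = n" by (simp add: S_def)
  have small: "S ! i \<le> p" if "i < m" for i
  proof -
    have "i < n" using that by (simp add: n)
    then have "S ! i = degree n E i" by (simp add: S_def)
    then show ?thesis using that G(2)[OF that] assms degree_cone[OF G(1) that] by (simp add: E_def n)
  qed
  have "\<not> potentially_graphical (p + 2) (K_p11 p) S"
  proof
    assume "potentially_graphical (p + 2) (K_p11 p) S"
    then obtain a b where "a \<noteq> b" "a < n" "b < n" "p + 1 \<le> S ! a" "p + 1 \<le> S ! b"
      using potentially_K_p11_two_large_entries length by metis
    then show False using small[of a] small[of b] by (auto simp: n less_Suc_eq)
  qed
  moreover have "sum_list S = 2 * ((p + 1) * m div 2)"
  proof -
    have "sum_list S = (\<Sum>i<Suc m. degree n E i)"
      by (simp add: S_def n sum_set_upt_conv_sum_list_nat[symmetric] atLeast0LessThan)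
    also have "\<dots> = 2 * ((p - 1) * m div 2) + 2 * m"
      using sum_degree_cone[OF G(1)] G(3) by (simp add: E_def n)
    also have "\<dots> = 2 * ((p + 1) * m div 2)"
    proof -
      have "(p + 1) * m = (p - 1) * m + m * 2" using assms(1) by (simp add: algebra_simps)
      then have "(p + 1) * m div 2 = (p - 1) * m div 2 + m" by (simp only: div_mult_self1)
      then show ?thesis by simp
    qed
    finally show ?thesis .
  qed
  moreover have "graphical S" using realizes by (auto simp: graphical_def)
  ultimately show ?thesis using length by (auto simp: m_def)
qed

theorem theorem1:
  fixes p n :: nat
  assumes "p \<ge> 1" and "n \<ge> p + 2"
  shows "sigma_H (p + 2) (K_p11 p) n \<ge> 2 * (((p + 1) * (n - 1) + 2) div 2)"
proof -
  obtain S where S: "length S = n" "graphical S" "\<not> potentially_graphical (p + 2) (K_p11 p) S"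
    and sum: "sum_list S = 2 * ((p + 1) * (n - 1) div 2)"
    using exists_not_potentially_K_p11_graphical[OF assms] by blast
  have "sum_list S < sigma_H (p + 2) (K_p11 p) n" using sum_list_lt_sigma_H[OF S] .
  moreover have "even (sigma_H (p + 2) (K_p11 p) n)" using sigma_H_spec by blast
  ultimately show ?thesis using sum by (auto elim!: evenE)
qed

end
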